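(* Let $(p_n)$ be integers diverging to infinity and $(\kappa_n)$ a sequence in $(0,\infty)$ with $\kappa_n=o(p_n)$. Then $\sqrt{p_n\tilde e_{n2}}-1=O(\kappa_n^2/p_n^2)$ as $n\to\infty$.
   Context: For integer $p\ge2$ and $\kappa>0$, $c_{p,\kappa}=1/\int_{-1}^1(1-t^2)^{(p-3)/2}e^{\kappa t}dt$. $\tilde e_{n2}$ is the variance of the distribution on $[-1,1]$ with density $u\mapsto c_{p_n,\kappa_n}(1-u^2)^{(p_n-3)/2}e^{\kappa_nu}$. *)

theory Defs
  imports "HOL-Analysis.Analysis" "HOL-Library.Landau_Symbols"
begin

definition wmf :: "nat \<Rightarrow> real \<Rightarrow> real \<Rightarrow> real" where
  "wmf p \<kappa> t = (1 - t\<^sup>2) powr ((real p - 3) / 2) * exp (\<kappa> * t)"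

definition c_const :: "nat \<Rightarrow> real \<Rightarrow> real" where
  "c_const p \<kappa> = 1 / integral {-1..1} (wmf p \<kappa>)"

definition wdens :: "nat \<Rightarrow> real \<Rightarrow> real \<Rightarrow> real" where
  "wdens p \<kappa> u = c_const p \<kappa> * wmf p \<kappa> u"

definition wmean :: "nat \<Rightarrow> real \<Rightarrow> real" where
  "wmean p \<kappa> = integral {-1..1} (\<lambda>u. u * wdens p \<kappa> u)"

text \<open>Variance of that distribution (the quantity e~_{n2} for p = p_n, kappa = kappa_n).\<close>
definition wvar :: "nat \<Rightarrow> real \<Rightarrow> real" where
  "wvar p \<kappa> = integral {-1..1} (\<lambda>u. (u - wmean p \<kappa>)\<^sup>2 * wdens p \<kappa> u)"

end

theory Submission
  imports Defs
begin

text \<open>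
  Integrating by parts against (1 - u^2)^((p-1)/2) e^(\<kappa>u), which vanishes at \<plusminus>1,
  gives the Stein identity E[(1 - u^2) \<phi>'(u) + \<phi>(u) (\<kappa>(1 - u^2) - (p - 1) u)] = 0.
  With \<phi> = (u - m)^k for k = 0, \<dots>, 3 this yields linear relations between the mean m and the
  central moments \<mu>2, \<dots>, \<mu>5, which together with a few positivity constraints coming from
  the support [-1, 1] force m = O(\<kappa>/p), \<mu>2 = O(1/p), \<mu>4 = O(1/p^2) and \<mu>3 = O(\<kappa>/p^3).
  The relation for k = 1 reads p \<mu>2 - 1 = - m^2 - 2\<kappa>m\<mu>2 - \<kappa>\<mu>3, hence
  p \<mu>2 - 1 = O(\<kappa>^2/p^2), and |\<surd>y - 1| \<le> |y - 1| transfers this to the square root.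
\<close>

text \<open>(1 - u^2) times the logarithmic derivative of (1 - u^2)^((p-1)/2) e^(\<kappa>u).\<close>
definition stein_drift :: "nat \<Rightarrow> real \<Rightarrow> real \<Rightarrow> real" where
  "stein_drift p \<kappa> u = \<kappa> * (1 - u\<^sup>2) - (real p - 1) * u"

lemma wmf_nonneg: "0 \<le> wmf p \<kappa> u"
  unfolding wmf_def by simp

lemma continuous_on_wmf:
  assumes "4 \<le> p"
  shows "continuous_on {-1..1} (wmf p \<kappa>)"
  unfolding wmf_def using assms
  by (intro continuous_intros continuous_on_powr') (auto simp: abs_square_le_1)

lemma integrable_on_mult_wmf:
  assumes "4 \<le> p" and "continuous_on {-1..1} h"
  shows "(\<lambda>u. h u * wmf p \<kappa> u) integrable_on {-1..1}"
  by (intro integrable_continuous_interval continuous_on_mult assms continuous_on_wmf)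

lemma integral_wmf_pos:
  assumes "4 \<le> p"
  shows "0 < integral {-1..1} (wmf p \<kappa>)"
proof -
  have "integral (cbox (-1) 1) (wmf p \<kappa>) \<noteq> 0"
  proof
    assume "integral (cbox (-1) 1) (wmf p \<kappa>) = 0"
    then have "wmf p \<kappa> 0 = 0"
      using integral_cbox_eq_0_iff[of "-1" 1 "wmf p \<kappa>"] continuous_on_wmf[OF assms]
      by (auto simp: wmf_nonneg)
    then show False by (simp add: wmf_def)
  qed
  moreover have "0 \<le> integral {-1..1} (wmf p \<kappa>)"
    using integrable_on_mult_wmf[OF assms, of "\<lambda>_. 1"] by (intro integral_nonneg) (auto simp: wmf_nonneg)
  ultimately show ?thesis by auto
qed

lemma wmf_stein_identity:
  assumes "2 \<le> p" and "continuous_on {-1..1} \<phi>"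
    and "\<And>x. x \<in> {-1<..<1} \<Longrightarrow> (\<phi> has_real_derivative \<phi>' x) (at x)"
  shows "((\<lambda>u. ((1 - u\<^sup>2) * \<phi>' u + \<phi> u * stein_drift p \<kappa> u) * wmf p \<kappa> u)
           has_integral 0) {-1..1}"
proof -
  define b where "b = (real p - 1) / 2"
  have b_pos: "0 < b" using assms(1) by (simp add: b_def)
  define F where "F u = \<phi> u * (1 - u\<^sup>2) powr b * exp (\<kappa> * u)" for u
  have "((\<lambda>u. ((1 - u\<^sup>2) * \<phi>' u + \<phi> u * stein_drift p \<kappa> u) * wmf p \<kappa> u)
          has_integral (F 1 - F (-1))) {-1..1}"
  proof (rule fundamental_theorem_of_calculus_interior)
    show "continuous_on {-1..1} F" unfolding F_def using b_pos assms(2)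
      by (intro continuous_intros continuous_on_powr') (auto simp: abs_square_le_1)
  next
    fix x :: real assume x: "x \<in> {-1<..<1}"
    have pos: "0 < 1 - x\<^sup>2" using x by (simp add: abs_square_less_1 abs_less_iff)
    have dpowr: "((\<lambda>u. (1 - u\<^sup>2) powr b) has_real_derivative
                   b * (1 - x\<^sup>2) powr (b - 1) * (- (2 * x))) (at x)"
      using pos by (auto intro!: derivative_eq_intros simp: power2_eq_square)
    have dexp: "((\<lambda>u. exp (\<kappa> * u)) has_real_derivative exp (\<kappa> * x) * \<kappa>) (at x)"
      by (auto intro!: derivative_eq_intros)
    have "(F has_real_derivative
       (\<phi>' x * (1 - x\<^sup>2) powr b + \<phi> x * (b * (1 - x\<^sup>2) powr (b - 1) * (- (2 * x)))) * exp (\<kappa> * x)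
       + \<phi> x * (1 - x\<^sup>2) powr b * (exp (\<kappa> * x) * \<kappa>)) (at x)"
      unfolding F_def using DERIV_mult[OF DERIV_mult[OF assms(3)[OF x] dpowr] dexp] by (simp add: mult_ac)
    moreover have "(1 - x\<^sup>2) powr b = (1 - x\<^sup>2) * (1 - x\<^sup>2) powr (b - 1)"
      using pos by (simp add: powr_diff)
    moreover have "wmf p \<kappa> x = (1 - x\<^sup>2) powr (b - 1) * exp (\<kappa> * x)"
      by (simp add: wmf_def b_def field_simps)
    moreover have "real p - 1 = 2 * b" by (simp add: b_def)
    ultimately show "(F has_vector_derivative
                        ((1 - x\<^sup>2) * \<phi>' x + \<phi> x * stein_drift p \<kappa> x) * wmf p \<kappa> x) (at x)"
      unfolding has_real_derivative_iff_has_vector_derivative[symmetric] stein_drift_def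
      by (simp add: algebra_simps)
  qed simp
  moreover have "F 1 = 0" "F (-1) = 0" using b_pos by (auto simp: F_def)
  ultimately show ?thesis by simp
qed

definition wcmoment :: "nat \<Rightarrow> real \<Rightarrow> nat \<Rightarrow> real" where
  "wcmoment p \<kappa> k = integral {-1..1} (\<lambda>u. (u - wmean p \<kappa>) ^ k * wdens p \<kappa> u)"

definition quintic ::
    "real \<Rightarrow> real \<Rightarrow> real \<Rightarrow> real \<Rightarrow> real \<Rightarrow> real \<Rightarrow> real \<Rightarrow> real" where
  "quintic c0 c1 c2 c3 c4 c5 x = c0 + c1 * x + c2 * x ^ 2 + c3 * x ^ 3 + c4 * x ^ 4 + c5 * x ^ 5"

lemma c_const_pos: "4 \<le> p \<Longrightarrow> 0 < c_const p \<kappa>"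
  by (simp add: c_const_def integral_wmf_pos)

lemma wdens_nonneg: "4 \<le> p \<Longrightarrow> 0 \<le> wdens p \<kappa> u"
  by (simp add: wdens_def c_const_pos wmf_nonneg less_imp_le)

lemma integrable_on_mult_wdens:
  assumes "4 \<le> p" and "continuous_on {-1..1} h"
  shows "(\<lambda>u. h u * wdens p \<kappa> u) integrable_on {-1..1}"
  using integrable_on_mult_wmf[OF assms(1), of "\<lambda>u. c_const p \<kappa> * h u"] assms(2)
  by (simp add: wdens_def mult_ac continuous_intros)

lemma integral_wdens: "4 \<le> p \<Longrightarrow> integral {-1..1} (wdens p \<kappa>) = 1"
  using integral_wmf_pos[of p \<kappa>] by (simp add: wdens_def[abs_def] c_const_def)

lemma wcmoment_0: "4 \<le> p \<Longrightarrow> wcmoment p \<kappa> 0 = 1"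
  by (simp add: wcmoment_def integral_wdens)

lemma wcmoment_1: "4 \<le> p \<Longrightarrow> wcmoment p \<kappa> 1 = 0"
proof -
  assume p: "4 \<le> p"
  have "wcmoment p \<kappa> 1 = integral {-1..1} (\<lambda>u. u * wdens p \<kappa> u - wmean p \<kappa> * wdens p \<kappa> u)"
    by (simp add: wcmoment_def algebra_simps)
  also have "\<dots> = wmean p \<kappa> - wmean p \<kappa> * integral {-1..1} (wdens p \<kappa>)"
    using integrable_on_mult_wdens[OF p, of "\<lambda>u. u"] integrable_on_mult_wdens[OF p, of "\<lambda>_. wmean p \<kappa>"]
    by (simp add: integral_diff wmean_def)
  finally show ?thesis by (simp add: integral_wdens[OF p])
qed

lemma integral_quintic_wdens:
  assumes "4 \<le> p"
  shows "integral {-1..1} (\<lambda>u. quintic c0 c1 c2 c3 c4 c5 (u - wmean p \<kappa>) * wdens p \<kappa> u)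
    = c0 + c2 * wcmoment p \<kappa> 2 + c3 * wcmoment p \<kappa> 3 + c4 * wcmoment p \<kappa> 4 + c5 * wcmoment p \<kappa> 5"
proof -
  define m where "m = wmean p \<kappa>"
  have moment: "((\<lambda>u. c * ((u - m) ^ k * wdens p \<kappa> u)) has_integral c * wcmoment p \<kappa> k) {-1..1}"
    for c k
    unfolding wcmoment_def m_def
    by (intro has_integral_mult_right integrable_integral integrable_on_mult_wdens assms continuous_intros)
  have expand: "(\<lambda>u. quintic c0 c1 c2 c3 c4 c5 (u - m) * wdens p \<kappa> u) =
    (\<lambda>u. c0 * ((u - m) ^ 0 * wdens p \<kappa> u) + c1 * ((u - m) ^ 1 * wdens p \<kappa> u)
       + c2 * ((u - m) ^ 2 * wdens p \<kappa> u) + c3 * ((u - m) ^ 3 * wdens p \<kappa> u)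
       + c4 * ((u - m) ^ 4 * wdens p \<kappa> u) + c5 * ((u - m) ^ 5 * wdens p \<kappa> u))"
    by (simp add: quintic_def algebra_simps)
  have "integral {-1..1} (\<lambda>u. quintic c0 c1 c2 c3 c4 c5 (u - m) * wdens p \<kappa> u)
    = c0 * wcmoment p \<kappa> 0 + c1 * wcmoment p \<kappa> 1 + c2 * wcmoment p \<kappa> 2
      + c3 * wcmoment p \<kappa> 3 + c4 * wcmoment p \<kappa> 4 + c5 * wcmoment p \<kappa> 5"
    unfolding expand by (intro integral_unique has_integral_add moment)
  then show ?thesis unfolding m_def wcmoment_0[OF assms] wcmoment_1[OF assms] by simp
qed

lemma wcmoment_quintic_nonneg:
  assumes "4 \<le> p" and "\<And>u. u \<in> {-1..1} \<Longrightarrow> 0 \<le> quintic c0 c1 c2 c3 c4 c5 (u - wmean p \<kappa>)"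
  shows "0 \<le> c0 + c2 * wcmoment p \<kappa> 2 + c3 * wcmoment p \<kappa> 3 + c4 * wcmoment p \<kappa> 4
           + c5 * wcmoment p \<kappa> 5"
  unfolding integral_quintic_wdens[OF assms(1), of c0 c1 c2 c3 c4 c5 \<kappa>, symmetric]
  using assms wdens_nonneg[OF assms(1)]
  by (intro integral_nonneg integrable_on_mult_wdens) (auto simp: quintic_def intro!: continuous_intros)

lemma wcmoment_stein:
  assumes "4 \<le> p"
    and "\<And>u. (1 - u\<^sup>2) * (real k * (u - wmean p \<kappa>) ^ (k - 1))
               + (u - wmean p \<kappa>) ^ k * stein_drift p \<kappa> u
             = quintic c0 c1 c2 c3 c4 c5 (u - wmean p \<kappa>)"
  shows "c0 + c2 * wcmoment p \<kappa> 2 + c3 * wcmoment p \<kappa> 3 + c4 * wcmoment p \<kappa> 4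
           + c5 * wcmoment p \<kappa> 5 = 0"
proof -
  have "((\<lambda>u. ((1 - u\<^sup>2) * (real k * (u - wmean p \<kappa>) ^ (k - 1))
               + (u - wmean p \<kappa>) ^ k * stein_drift p \<kappa> u) * wmf p \<kappa> u) has_integral 0) {-1..1}"
    using assms(1) by (intro wmf_stein_identity) (auto intro!: derivative_eq_intros continuous_intros)
  from has_integral_mult_right[OF this, of "c_const p \<kappa>"]
  have "((\<lambda>u. quintic c0 c1 c2 c3 c4 c5 (u - wmean p \<kappa>) * wdens p \<kappa> u) has_integral 0) {-1..1}"
    unfolding assms(2) by (simp add: wdens_def mult_ac)
  then show ?thesis
    using integral_quintic_wdens[OF assms(1), of c0 c1 c2 c3 c4 c5 \<kappa>] by (simp add: integral_unique)
qed

text \<open>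
  Here q = p - 1, m is the mean and \<mu>2, \<dots>, \<mu>5 are the central moments:
  stein0, \<dots>, stein3 are the Stein identities for (u - m)^k, k = 0, \<dots>, 3, and the inequalities
  integrate x^2, x^4, 1 - u^2, x^2(1 - u), x^2(1 + u), x^4(1 + u) (x = u - m) against the density.
\<close>
locale moment_recursion =
  fixes q \<kappa> m \<mu>2 \<mu>3 \<mu>4 \<mu>5 :: real
  assumes q_ge: "4 \<le> q" and \<kappa>_pos: "0 < \<kappa>" and \<kappa>_le: "\<kappa> \<le> q / 2"
    and stein0: "\<kappa> * (1 - m\<^sup>2) - q * m - \<kappa> * \<mu>2 = 0"
    and stein1: "1 - m\<^sup>2 - \<mu>2 - (2 * \<kappa> * m + q) * \<mu>2 - \<kappa> * \<mu>3 = 0"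
    and stein2: "(\<kappa> * (1 - m\<^sup>2) - q * m - 4 * m) * \<mu>2 - (2 + 2 * \<kappa> * m + q) * \<mu>3 - \<kappa> * \<mu>4 = 0"
    and stein3: "3 * (1 - m\<^sup>2) * \<mu>2 + (\<kappa> * (1 - m\<^sup>2) - q * m - 6 * m) * \<mu>3
                 - (3 + 2 * \<kappa> * m + q) * \<mu>4 - \<kappa> * \<mu>5 = 0"
    and second_nonneg: "0 \<le> \<mu>2" and fourth_nonneg: "0 \<le> \<mu>4"
    and second_le_support: "\<mu>2 \<le> 1 - m\<^sup>2"
    and third_le: "\<mu>3 \<le> (1 - m) * \<mu>2"
    and third_ge: "- ((1 + m) * \<mu>2) \<le> \<mu>3"
    and fifth_ge: "- ((1 + m) * \<mu>4) \<le> \<mu>5"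
begin

lemma drift_at_mean: "\<kappa> * (1 - m\<^sup>2) - q * m = \<kappa> * \<mu>2"
  using stein0 by simp

lemma mean_nonneg: "0 \<le> m"
proof -
  have "0 \<le> \<kappa> * (1 - m\<^sup>2 - \<mu>2)" using second_le_support \<kappa>_pos by simp
  then have "0 \<le> q * m" using drift_at_mean by (simp add: algebra_simps)
  then show ?thesis using q_ge by (simp add: zero_le_mult_iff)
qed

lemma mean_mult_le: "q * m \<le> \<kappa>"
proof -
  have "1 - m\<^sup>2 - \<mu>2 \<le> 1" using second_nonneg zero_le_power2[of m] by linarith
  then have "\<kappa> * (1 - m\<^sup>2 - \<mu>2) \<le> \<kappa> * 1" using \<kappa>_pos by (intro mult_left_mono) auto
  then show ?thesis using drift_at_mean by (simp add: algebra_simps)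
qed

lemma mean_le: "m \<le> \<kappa> / q"
  using mean_mult_le q_ge by (simp add: field_simps)

lemma mean_le_half: "m \<le> 1 / 2"
proof -
  have "q * m \<le> q * (1 / 2)" using mean_mult_le \<kappa>_le by simp
  then show ?thesis using q_ge by simp
qed

lemma second_le: "\<mu>2 \<le> 2 / q"
proof -
  have "0 \<le> \<kappa> * (\<mu>3 + (1 + m) * \<mu>2) + \<kappa> * m * \<mu>2"
    using third_ge \<kappa>_pos second_nonneg mean_nonneg by simp
  then have "(q - \<kappa>) * \<mu>2 \<le> (2 * \<kappa> * m + q) * \<mu>2 + \<kappa> * \<mu>3"
    by (simp add: algebra_simps)
  also have "\<dots> = 1 - m\<^sup>2 - \<mu>2" using stein1 by (simp add: algebra_simps)
  also have "\<dots> \<le> 1" using second_nonneg zero_le_power2[of m] by linarith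
  finally have "(q - \<kappa>) * \<mu>2 \<le> 1" .
  moreover have "(q / 2) * \<mu>2 \<le> (q - \<kappa>) * \<mu>2" using \<kappa>_le second_nonneg by (intro mult_right_mono) auto
  ultimately show ?thesis using q_ge by (simp add: field_simps)
qed

lemma kappa_second_le: "\<kappa> * \<mu>2 \<le> 1"
proof -
  have "\<kappa> * \<mu>2 \<le> (q / 2) * (2 / q)" using \<kappa>_le second_le second_nonneg \<kappa>_pos by (intro mult_mono) auto
  then show ?thesis using q_ge by simp
qed

lemma fourth_le: "\<mu>4 \<le> 34 / q\<^sup>2"
proof -
  have "0 \<le> \<kappa> * (\<mu>5 + (1 + m) * \<mu>4) + \<kappa> * m * \<mu>4 + 3 * \<mu>4"
    using fifth_ge \<kappa>_pos fourth_nonneg mean_nonneg by simp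
  then have "(q - \<kappa>) * \<mu>4 \<le> (3 + 2 * \<kappa> * m + q) * \<mu>4 + \<kappa> * \<mu>5"
    by (simp add: algebra_simps)
  also have "\<dots> = 3 * (1 - m\<^sup>2) * \<mu>2 + \<kappa> * \<mu>2 * \<mu>3 - 6 * m * \<mu>3"
    using stein3 unfolding drift_at_mean by (simp add: algebra_simps)
  also have "\<dots> \<le> 3 * \<mu>2 + (\<kappa> * \<mu>2) * ((1 - m) * \<mu>2) + 6 * (m * (1 + m)) * \<mu>2"
  proof -
    have "3 * (1 - m\<^sup>2) * \<mu>2 \<le> 3 * \<mu>2" using second_nonneg by (simp add: algebra_simps)
    moreover have "(\<kappa> * \<mu>2) * \<mu>3 \<le> (\<kappa> * \<mu>2) * ((1 - m) * \<mu>2)"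
      using third_le second_nonneg \<kappa>_pos by (intro mult_left_mono) auto
    moreover have "6 * m * (- \<mu>3) \<le> 6 * m * ((1 + m) * \<mu>2)"
      using third_ge mean_nonneg by (intro mult_left_mono) auto
    ultimately show ?thesis unfolding mult_minus_right by (simp add: algebra_simps)
  qed
  also have "\<dots> \<le> 3 * \<mu>2 + 1 * \<mu>2 + 6 * (3 / 4) * \<mu>2"
  proof -
    have "(1 - m) * \<mu>2 \<le> \<mu>2" using mean_nonneg second_nonneg by (simp add: algebra_simps)
    with kappa_second_le have "(\<kappa> * \<mu>2) * ((1 - m) * \<mu>2) \<le> 1 * \<mu>2"
      using second_nonneg mean_le_half by (intro mult_mono) auto
    moreover have "m * (1 + m) \<le> (1 / 2) * (3 / 2)"
      using mean_le_half mean_nonneg by (intro mult_mono) auto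
    then have "6 * (m * (1 + m)) * \<mu>2 \<le> 6 * (3 / 4) * \<mu>2" using second_nonneg by (intro mult_right_mono) auto
    ultimately show ?thesis by linarith
  qed
  finally have "(q - \<kappa>) * \<mu>4 \<le> (17 / 2) * \<mu>2" by simp
  moreover have "(q / 2) * \<mu>4 \<le> (q - \<kappa>) * \<mu>4" using \<kappa>_le fourth_nonneg by (intro mult_right_mono) auto
  ultimately have "q * \<mu>4 \<le> 17 * \<mu>2" by simp
  then have "q * \<mu>4 \<le> 34 / q" using second_le by simp
  then show ?thesis using q_ge by (simp add: field_simps power2_eq_square)
qed

lemma abs_third_le: "\<bar>\<mu>3\<bar> \<le> 46 * \<kappa> / q ^ 3"
proof -
  have "(2 + 2 * \<kappa> * m + q) * \<mu>3 = \<kappa> * \<mu>2 * \<mu>2 - 4 * m * \<mu>2 - \<kappa> * \<mu>4"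
    using stein2 unfolding drift_at_mean by (simp add: algebra_simps)
  also have "\<bar>\<dots>\<bar> \<le> \<kappa> * \<mu>2 * \<mu>2 + 4 * m * \<mu>2 + \<kappa> * \<mu>4"
    using second_nonneg fourth_nonneg mean_nonneg \<kappa>_pos by (simp add: abs_le_iff)
  also have "\<dots> \<le> \<kappa> * (2 / q) * (2 / q) + 4 * (\<kappa> / q) * (2 / q) + \<kappa> * (34 / q\<^sup>2)"
  proof -
    have "\<kappa> * \<mu>2 * \<mu>2 \<le> \<kappa> * (2 / q) * (2 / q)"
      using \<kappa>_pos second_nonneg second_le q_ge by (intro mult_mono) auto
    moreover have "4 * m * \<mu>2 \<le> 4 * (\<kappa> / q) * (2 / q)"
      using mean_nonneg second_nonneg second_le mean_le q_ge \<kappa>_pos by (intro mult_mono) auto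
    moreover have "\<kappa> * \<mu>4 \<le> \<kappa> * (34 / q\<^sup>2)" using \<kappa>_pos fourth_le by (intro mult_left_mono) auto
    ultimately show ?thesis by linarith
  qed
  also have "\<dots> = q * (46 * \<kappa> / q ^ 3)" using q_ge by (simp add: field_simps power2_eq_square power3_eq_cube)
  finally have "\<bar>(2 + 2 * \<kappa> * m + q) * \<mu>3\<bar> \<le> q * (46 * \<kappa> / q ^ 3)" .
  moreover have "q * \<bar>\<mu>3\<bar> \<le> \<bar>(2 + 2 * \<kappa> * m + q) * \<mu>3\<bar>"
    using mean_nonneg \<kappa>_pos q_ge by (simp add: abs_mult mult_right_mono)
  ultimately have "q * \<bar>\<mu>3\<bar> \<le> q * (46 * \<kappa> / q ^ 3)" by linarith
  then show ?thesis by (rule mult_left_le_imp_le) (use q_ge in simp)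
qed

lemma scaled_second_deviation_le: "\<bar>(q + 1) * \<mu>2 - 1\<bar> \<le> 30 * \<kappa>\<^sup>2 / (q + 1)\<^sup>2"
proof -
  have "(q + 1) * \<mu>2 - 1 = - m\<^sup>2 - 2 * \<kappa> * m * \<mu>2 - \<kappa> * \<mu>3"
    using stein1 by (simp add: algebra_simps)
  also have "\<bar>\<dots>\<bar> \<le> m\<^sup>2 + 2 * \<kappa> * m * \<mu>2 + \<kappa> * \<bar>\<mu>3\<bar>"
  proof -
    have "\<kappa> * \<mu>3 \<le> \<kappa> * \<bar>\<mu>3\<bar>" "\<kappa> * (- \<mu>3) \<le> \<kappa> * \<bar>\<mu>3\<bar>"
      using \<kappa>_pos by (intro mult_left_mono; simp)+
    moreover have "0 \<le> 2 * \<kappa> * m * \<mu>2" using mean_nonneg \<kappa>_pos second_nonneg by simp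
    ultimately show ?thesis unfolding abs_le_iff using zero_le_power2[of m] by linarith
  qed
  also have "\<dots> \<le> (\<kappa> / q)\<^sup>2 + 2 * \<kappa> * (\<kappa> / q) * (2 / q) + \<kappa> * (46 * \<kappa> / q ^ 3)"
  proof -
    have "m\<^sup>2 \<le> (\<kappa> / q)\<^sup>2" using mean_nonneg mean_le by (intro power_mono) auto
    moreover have "2 * \<kappa> * m * \<mu>2 \<le> 2 * \<kappa> * (\<kappa> / q) * (2 / q)"
      using mean_nonneg \<kappa>_pos second_nonneg mean_le second_le q_ge by (intro mult_mono) auto
    moreover have "\<kappa> * \<bar>\<mu>3\<bar> \<le> \<kappa> * (46 * \<kappa> / q ^ 3)"
      using \<kappa>_pos abs_third_le by (intro mult_left_mono) auto
    ultimately show ?thesis by linarith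
  qed
  also have "\<dots> = (5 + 46 / q) * \<kappa>\<^sup>2 / q\<^sup>2"
    using q_ge by (simp add: field_simps power2_eq_square power3_eq_cube)
  also have "\<dots> \<le> 17 * \<kappa>\<^sup>2 / q\<^sup>2"
    using q_ge by (intro divide_right_mono mult_right_mono) (auto simp: field_simps)
  also have "\<dots> \<le> 30 * \<kappa>\<^sup>2 / (q + 1)\<^sup>2"
  proof -
    have "4 * q \<le> q * q" using q_ge by (intro mult_right_mono) auto
    moreover have "(q + 1)\<^sup>2 = q * q + 2 * q + 1" "q\<^sup>2 = q * q"
      by (simp_all add: power2_eq_square algebra_simps)
    ultimately have "17 * (q + 1)\<^sup>2 \<le> 30 * q\<^sup>2" using q_ge by linarith
    then have "17 / q\<^sup>2 \<le> 30 / (q + 1)\<^sup>2" using q_ge by (simp add: field_simps)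
    from mult_right_mono[OF this, of "\<kappa>\<^sup>2"] show ?thesis by simp
  qed
  finally show ?thesis .
qed

end

lemma wvar_eq_wcmoment: "wvar p \<kappa> = wcmoment p \<kappa> 2"
  by (simp add: wvar_def wcmoment_def)

lemma wvar_nonneg: "4 \<le> p \<Longrightarrow> 0 \<le> wvar p \<kappa>"
  unfolding wvar_def
  by (intro integral_nonneg integrable_on_mult_wdens) (auto simp: wdens_nonneg intro!: continuous_intros)

lemma wcmoment_stein_recursions:
  fixes p :: nat and \<kappa> :: real
  assumes p: "4 \<le> p"
  defines q_def: "q \<equiv> real p - 1" and m_def: "m \<equiv> wmean p \<kappa>" and M_def: "M \<equiv> wcmoment p \<kappa>"
  shows "\<kappa> * (1 - m\<^sup>2) - q * m - \<kappa> * M 2 = 0"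
    and "1 - m\<^sup>2 - M 2 - (2 * \<kappa> * m + q) * M 2 - \<kappa> * M 3 = 0"
    and "(\<kappa> * (1 - m\<^sup>2) - q * m - 4 * m) * M 2 - (2 + 2 * \<kappa> * m + q) * M 3 - \<kappa> * M 4 = 0"
    and "3 * (1 - m\<^sup>2) * M 2 + (\<kappa> * (1 - m\<^sup>2) - q * m - 6 * m) * M 3
           - (3 + 2 * \<kappa> * m + q) * M 4 - \<kappa> * M 5 = 0"
proof -
  define d0 d1 where "d0 = \<kappa> * (1 - m\<^sup>2) - q * m" and "d1 = - (2 * \<kappa> * m + q)"
  have drift: "stein_drift p \<kappa> u = d0 + d1 * (u - m) - \<kappa> * (u - m)\<^sup>2" for u
    by (simp add: stein_drift_def d0_def d1_def q_def algebra_simps power2_eq_square)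
  have support: "1 - u\<^sup>2 = (1 - m\<^sup>2) - 2 * m * (u - m) - (u - m)\<^sup>2" for u :: real
    by (simp add: algebra_simps power2_eq_square)
  have stein: "c0 + c2 * M 2 + c3 * M 3 + c4 * M 4 + c5 * M 5 = 0"
    if "\<And>x. (1 - m\<^sup>2 - 2 * m * x - x\<^sup>2) * (real k * x ^ (k - 1)) + x ^ k * (d0 + d1 * x - \<kappa> * x\<^sup>2)
             = quintic c0 c1 c2 c3 c4 c5 x" for k c0 c1 c2 c3 c4 c5
    unfolding M_def
  proof (rule wcmoment_stein[OF p])
    fix u
    show "(1 - u\<^sup>2) * (real k * (u - wmean p \<kappa>) ^ (k - 1)) + (u - wmean p \<kappa>) ^ k * stein_drift p \<kappa> u
          = quintic c0 c1 c2 c3 c4 c5 (u - wmean p \<kappa>)"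
      using that[of "u - m"] unfolding drift support[of u] m_def by simp
  qed
  have "d0 + (- \<kappa>) * M 2 + 0 * M 3 + 0 * M 4 + 0 * M 5 = 0"
    by (rule stein[of 0 _ d1]) (simp add: quintic_def)
  then show "\<kappa> * (1 - m\<^sup>2) - q * m - \<kappa> * M 2 = 0" by (simp add: d0_def)
  have "(1 - m\<^sup>2) + (d1 - 1) * M 2 + (- \<kappa>) * M 3 + 0 * M 4 + 0 * M 5 = 0"
    by (rule stein[of 1 _ "d0 - 2 * m"]) (simp add: quintic_def algebra_simps power2_eq_square power3_eq_cube)
  then show "1 - m\<^sup>2 - M 2 - (2 * \<kappa> * m + q) * M 2 - \<kappa> * M 3 = 0"
    by (simp add: d1_def algebra_simps)
  have "0 + (d0 - 4 * m) * M 2 + (d1 - 2) * M 3 + (- \<kappa>) * M 4 + 0 * M 5 = 0"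
    by (rule stein[of 2 _ "2 * (1 - m\<^sup>2)"]) (simp add: quintic_def algebra_simps eval_nat_numeral)
  then show "(\<kappa> * (1 - m\<^sup>2) - q * m - 4 * m) * M 2 - (2 + 2 * \<kappa> * m + q) * M 3 - \<kappa> * M 4 = 0"
    by (simp add: d0_def d1_def algebra_simps)
  have "0 + (3 * (1 - m\<^sup>2)) * M 2 + (d0 - 6 * m) * M 3 + (d1 - 3) * M 4 + (- \<kappa>) * M 5 = 0"
    by (rule stein[of 3 _ 0]) (simp add: quintic_def algebra_simps eval_nat_numeral)
  then show "3 * (1 - m\<^sup>2) * M 2 + (\<kappa> * (1 - m\<^sup>2) - q * m - 6 * m) * M 3
               - (3 + 2 * \<kappa> * m + q) * M 4 - \<kappa> * M 5 = 0"
    by (simp add: d0_def d1_def algebra_simps)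
qed

lemma wcmoment_support_bounds:
  fixes p :: nat and \<kappa> :: real
  assumes p: "4 \<le> p"
  defines m_def: "m \<equiv> wmean p \<kappa>" and M_def: "M \<equiv> wcmoment p \<kappa>"
  shows "0 \<le> M 2" and "0 \<le> M 4" and "M 2 \<le> 1 - m\<^sup>2"
    and "M 3 \<le> (1 - m) * M 2" and "- ((1 + m) * M 2) \<le> M 3" and "- ((1 + m) * M 4) \<le> M 5"
proof -
  have nonneg: "0 \<le> c0 + c2 * M 2 + c3 * M 3 + c4 * M 4 + c5 * M 5"
    if "\<And>u. - 1 \<le> u \<Longrightarrow> u \<le> 1 \<Longrightarrow> 0 \<le> quintic c0 c1 c2 c3 c4 c5 (u - m)" for c0 c1 c2 c3 c4 c5
    unfolding M_def using that unfolding m_def by (intro wcmoment_quintic_nonneg[OF p]) auto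
  show "0 \<le> M 2" using nonneg[of 0 0 1 0 0 0] by (simp add: quintic_def)
  show "0 \<le> M 4" using nonneg[of 0 0 0 0 1 0] by (simp add: quintic_def)
  have "0 \<le> (1 - m\<^sup>2) + (- 1) * M 2 + 0 * M 3 + 0 * M 4 + 0 * M 5"
  proof (rule nonneg[of _ "- 2 * m"])
    fix u :: real assume "- 1 \<le> u" "u \<le> 1"
    then have "0 \<le> (1 - u) * (1 + u)" by simp
    then show "0 \<le> quintic (1 - m\<^sup>2) (- 2 * m) (- 1) 0 0 0 (u - m)"
      by (simp add: quintic_def algebra_simps power2_eq_square)
  qed
  then show "M 2 \<le> 1 - m\<^sup>2" by simp
  have "0 \<le> 0 + (1 - m) * M 2 + (- 1) * M 3 + 0 * M 4 + 0 * M 5"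
  proof (rule nonneg[of _ 0])
    fix u :: real assume "u \<le> 1"
    then have "0 \<le> (u - m)\<^sup>2 * (1 - u)" by simp
    then show "0 \<le> quintic 0 0 (1 - m) (- 1) 0 0 (u - m)"
      by (simp add: quintic_def algebra_simps power3_eq_cube power2_eq_square)
  qed
  then show "M 3 \<le> (1 - m) * M 2" by simp
  have "0 \<le> 0 + (1 + m) * M 2 + 1 * M 3 + 0 * M 4 + 0 * M 5"
  proof (rule nonneg[of _ 0])
    fix u :: real assume "- 1 \<le> u"
    then have "0 \<le> (u - m)\<^sup>2 * (1 + u)" by simp
    then show "0 \<le> quintic 0 0 (1 + m) 1 0 0 (u - m)"
      by (simp add: quintic_def algebra_simps power3_eq_cube power2_eq_square)
  qed
  then show "- ((1 + m) * M 2) \<le> M 3" by simp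
  have "0 \<le> 0 + 0 * M 2 + 0 * M 3 + (1 + m) * M 4 + 1 * M 5"
  proof (rule nonneg[of _ 0])
    fix u :: real assume "- 1 \<le> u"
    then have "0 \<le> (u - m) ^ 4 * (1 + u)" by simp
    then show "0 \<le> quintic 0 0 0 0 (1 + m) 1 (u - m)"
      by (simp add: quintic_def algebra_simps eval_nat_numeral)
  qed
  then show "- ((1 + m) * M 4) \<le> M 5" by simp
qed

lemma wvar_deviation_le:
  assumes "5 \<le> p" and "0 < \<kappa>" and "\<kappa> \<le> (real p - 1) / 2"
  shows "\<bar>real p * wvar p \<kappa> - 1\<bar> \<le> 30 * \<kappa>\<^sup>2 / (real p)\<^sup>2"
proof -
  interpret moment_recursion "real p - 1" \<kappa> "wmean p \<kappa>"
    "wcmoment p \<kappa> 2" "wcmoment p \<kappa> 3" "wcmoment p \<kappa> 4" "wcmoment p \<kappa> 5"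
    using assms wcmoment_stein_recursions[of p \<kappa>] wcmoment_support_bounds[of p \<kappa>]
    by unfold_locales auto
  show ?thesis using scaled_second_deviation_le by (simp add: wvar_eq_wcmoment)
qed

lemma abs_sqrt_minus_one_le:
  fixes y :: real
  assumes "0 \<le> y"
  shows "\<bar>sqrt y - 1\<bar> \<le> \<bar>y - 1\<bar>"
proof -
  have "y - 1 = (sqrt y - 1) * (sqrt y + 1)" using assms by (simp add: algebra_simps)
  moreover have "\<bar>sqrt y + 1\<bar> = sqrt y + 1" using assms by simp
  ultimately have "\<bar>y - 1\<bar> = \<bar>sqrt y - 1\<bar> * (sqrt y + 1)" by (metis abs_mult)
  moreover have "\<bar>sqrt y - 1\<bar> * 1 \<le> \<bar>sqrt y - 1\<bar> * (sqrt y + 1)"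
    using assms by (intro mult_left_mono) auto
  ultimately show ?thesis by simp
qed

theorem lemmaA6:
  fixes p :: "nat \<Rightarrow> nat" and \<kappa> :: "nat \<Rightarrow> real"
  assumes "\<And>n. p n \<ge> 2"
    and "filterlim p at_top sequentially"
    and "\<And>n. \<kappa> n > 0"
    and "\<kappa> \<in> o[sequentially](\<lambda>n. real (p n))"
  shows "(\<lambda>n. sqrt (real (p n) * wvar (p n) (\<kappa> n)) - 1)
           \<in> O[sequentially](\<lambda>n. (\<kappa> n)\<^sup>2 / (real (p n))\<^sup>2)"
proof (rule bigoI[where c = 30])
  have "eventually (\<lambda>n. 5 \<le> p n) sequentially"
    using assms(2) by (simp add: filterlim_at_top)
  moreover have "eventually (\<lambda>n. \<kappa> n \<le> (1 / 4) * real (p n)) sequentially"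
    using landau_o.smallD[OF assms(4), of "1 / 4"] by (simp add: abs_of_pos assms(3))
  ultimately show "eventually (\<lambda>n. norm (sqrt (real (p n) * wvar (p n) (\<kappa> n)) - 1)
      \<le> 30 * norm ((\<kappa> n)\<^sup>2 / (real (p n))\<^sup>2)) sequentially"
  proof eventually_elim
    case (elim n)
    then have "\<kappa> n \<le> (real (p n) - 1) / 2" by simp
    then have "\<bar>real (p n) * wvar (p n) (\<kappa> n) - 1\<bar> \<le> 30 * (\<kappa> n)\<^sup>2 / (real (p n))\<^sup>2"
      using wvar_deviation_le elim assms(3) by blast
    moreover have "0 \<le> real (p n) * wvar (p n) (\<kappa> n)" using elim by (simp add: wvar_nonneg)
    ultimately show ?case using abs_sqrt_minus_one_le[of "real (p n) * wvar (p n) (\<kappa> n)"] by simp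
  qed
qed

end
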